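(* The variety $\mathbf N$ is generated by the semirings $S_c(a_1\cdots a_k)$, $k\geq 1$; that is, $\mathbf N=\mathsf V(\{S_c(a_1\cdots a_k)\mid k\ge1\})$.
   Context: $S_7$ is the ai-semiring on $\{\infty,a,1\}$ with $x+x=x$, $x+y=\infty$ for $x\neq y$, and commutative multiplication with $\infty$ a zero, $a\cdot a=\infty$, $a\cdot 1=a$, $1\cdot1=1$. $\mathbf N$ is the subvariety of $\mathsf V(S_7)$ defined by the identity $x^2y\approx x^2$. For $k\ge1$, $S_c(a_1\cdots a_k)$ is the flat semiring whose elements are $\infty$ together with all nonempty subwords of $a_1\cdots a_k$ in the free commutative semigroup; the product of two such words is their product if it is again such a subword and $\infty$ otherwise; $\infty$ is a multiplicative zero; $x+x=x$ and $x+y=\infty$ for $x\neq y$. *)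

theory Defs
  imports Main "HOL-Library.Multiset"
begin

datatype trm = Var nat | Plus trm trm | Times trm trm

fun eval :: "('a \<Rightarrow> 'a \<Rightarrow> 'a) \<Rightarrow> ('a \<Rightarrow> 'a \<Rightarrow> 'a) \<Rightarrow> (nat \<Rightarrow> 'a) \<Rightarrow> trm \<Rightarrow> 'a" where
  "eval ad mu v (Var n) = v n"
| "eval ad mu v (Plus s t) = ad (eval ad mu v s) (eval ad mu v t)"
| "eval ad mu v (Times s t) = mu (eval ad mu v s) (eval ad mu v t)"

definition holds :: "'a set \<Rightarrow> ('a \<Rightarrow> 'a \<Rightarrow> 'a) \<Rightarrow> ('a \<Rightarrow> 'a \<Rightarrow> 'a) \<Rightarrow> trm \<Rightarrow> trm \<Rightarrow> bool" where
  "holds S ad mu s t \<longleftrightarrow> (\<forall>v. (\<forall>n. v n \<in> S) \<longrightarrow> eval ad mu v s = eval ad mu v t)"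

datatype s7 = Inf7 | A7 | One7

definition add7 :: "s7 \<Rightarrow> s7 \<Rightarrow> s7" where
  "add7 x y = (if x = y then x else Inf7)"

fun mul7 :: "s7 \<Rightarrow> s7 \<Rightarrow> s7" where
  "mul7 One7 One7 = One7"
| "mul7 One7 A7 = A7"
| "mul7 A7 One7 = A7"
| "mul7 _ _ = Inf7"

text \<open>The flat semiring S_c(a_1...a_k): None is infinity, Some w is a nonempty subword w of
  a_1...a_k in the free commutative semigroup on letters 1..k (words as multisets of letters).\<close>
definition Sc_carrier :: "nat \<Rightarrow> nat multiset option set" where
  "Sc_carrier k = insert None (Some ` {w. w \<noteq> {#} \<and> w \<subseteq># mset_set {1..k}})"

definition Sc_add :: "nat multiset option \<Rightarrow> nat multiset option \<Rightarrow> nat multiset option" where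
  "Sc_add x y = (if x = y then x else None)"

definition Sc_mul :: "nat \<Rightarrow> nat multiset option \<Rightarrow> nat multiset option \<Rightarrow> nat multiset option" where
  "Sc_mul k x y = (case (x, y) of
      (Some u, Some w) \<Rightarrow> (if u + w \<subseteq># mset_set {1..k} then Some (u + w) else None)
    | _ \<Rightarrow> None)"

definition in_N :: "('a \<Rightarrow> 'a \<Rightarrow> 'a) \<Rightarrow> ('a \<Rightarrow> 'a \<Rightarrow> 'a) \<Rightarrow> bool" where
  "in_N ad mu \<longleftrightarrow>
     (\<forall>s t. holds UNIV add7 mul7 s t \<longrightarrow> holds UNIV ad mu s t) \<and>
     holds UNIV ad mu (Times (Times (Var 0) (Var 0)) (Var 1)) (Times (Var 0) (Var 0))"

definition in_V_Sc :: "('a \<Rightarrow> 'a \<Rightarrow> 'a) \<Rightarrow> ('a \<Rightarrow> 'a \<Rightarrow> 'a) \<Rightarrow> bool" where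
  "in_V_Sc ad mu \<longleftrightarrow>
     (\<forall>s t. (\<forall>k\<ge>1. holds (Sc_carrier k) Sc_add (Sc_mul k) s t) \<longrightarrow> holds UNIV ad mu s t)"

end

theory Submission
  imports Defs
begin

(* In a flat semiring a sum is defined only when all summands agree, so a term takes the value
   c under a valuation in S_c(a_1...a_k) iff each of its monomials does.  Hence a valuation by
   subwords is defined on t iff it is finite on the variables of t and, for every letter, the
   variables whose value contains that letter either meet every monomial of t exactly once
   (a transversal) or do not occur in t.  As S_7 is S_c(a) with an identity adjoined, s = t holds
   in S_7 iff s and t have the same variables and the same transversals.

   Call t covered if each of its variables lies in a transversal.  If s is covered and s = t
   holds in every S_c(a_1...a_k), evaluating in S_c(a_1...a_r) with one letter per transversal
   of s shows that t has the variables and (at least) the transversals of s; so t is covered as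
   well, and by symmetry s = t holds in S_7.  If s is not covered, a variable y of s lies in no
   transversal, so s = y^2 s holds in S_7; in N all squares are equal and absorb products, so s,
   and likewise t, evaluates to that common square.  Conversely each S_c(a_1...a_k) satisfies
   the identities of S_7, and x^2 y = x^2 since squares are infinite. *)

fun monomials :: "trm \<Rightarrow> nat multiset set" where
  "monomials (Var n) = {{#n#}}"
| "monomials (Plus s t) = monomials s \<union> monomials t"
| "monomials (Times s t) = {p + q | p q. p \<in> monomials s \<and> q \<in> monomials t}"

lemma monomials_nonempty: "monomials t \<noteq> {}"
  by (induction t) auto

fun term_vars :: "trm \<Rightarrow> nat set" where
  "term_vars (Var n) = {n}"
| "term_vars (Plus s t) = term_vars s \<union> term_vars t"
| "term_vars (Times s t) = term_vars s \<union> term_vars t"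

lemma finite_term_vars: "finite (term_vars t)"
  by (induction t) auto

lemma term_vars_nonempty: "term_vars t \<noteq> {}"
  by (induction t) auto

lemma term_vars_eq_monomials: "term_vars t = (\<Union>m\<in>monomials t. set_mset m)"
proof (induction t)
  case (Times s t)
  then show ?case
    using monomials_nonempty[of s] monomials_nonempty[of t] by fastforce
qed auto

lemma eval_cong_term_vars:
  "(\<And>x. x \<in> term_vars t \<Longrightarrow> v x = v' x) \<Longrightarrow> eval ad mu v t = eval ad mu v' t"
  by (induction t) auto

definition transversal :: "trm \<Rightarrow> nat set \<Rightarrow> bool" where
  "transversal t X \<longleftrightarrow> (\<forall>m\<in>monomials t. size {#x \<in># m. x \<in> X#} = 1)"

lemma size_filter_mset_eq_0_iff: "size {#x \<in># m. x \<in> X#} = 0 \<longleftrightarrow> set_mset m \<inter> X = {}"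
  by (auto simp: filter_mset_eq_conv)

lemma disjoint_term_vars_iff:
  "X \<inter> term_vars t = {} \<longleftrightarrow> (\<forall>m\<in>monomials t. size {#x \<in># m. x \<in> X#} = 0)"
  unfolding term_vars_eq_monomials size_filter_mset_eq_0_iff by blast

lemma transversal_Int_term_vars: "transversal t (X \<inter> term_vars t) \<longleftrightarrow> transversal t X"
proof -
  have "{#x \<in># m. x \<in> X \<inter> term_vars t#} = {#x \<in># m. x \<in> X#}" if "m \<in> monomials t" for m
    using that by (intro filter_mset_cong[OF refl]) (auto simp: term_vars_eq_monomials)
  then show ?thesis
    unfolding transversal_def by simp
qed

lemma transversal_square_Times_iff:
  "transversal (Times (Times (Var y) (Var y)) u) X \<longleftrightarrow> y \<notin> X \<and> transversal u X"
proof -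
  have mons: "monomials (Times (Times (Var y) (Var y)) u) = (\<lambda>q. {#y, y#} + q) ` monomials u"
    by auto
  show ?thesis
  proof (cases "y \<in> X")
    case True
    then show ?thesis
      using monomials_nonempty[of u] unfolding transversal_def mons by auto
  qed (auto simp: transversal_def mons)
qed

(* Valuations in S_c(a_1...a_k) with the empty word adjoined as identity; None is infinity. *)
definition word_valuation :: "nat \<Rightarrow> (nat \<Rightarrow> nat multiset option) \<Rightarrow> bool" where
  "word_valuation k w \<longleftrightarrow> (\<forall>n u. w n = Some u \<longrightarrow> u \<subseteq># mset_set {1..k})"

lemma word_valuation_if_Sc_carrier:
  assumes "\<And>n. w n \<in> Sc_carrier k"
  shows "word_valuation k w"
  unfolding word_valuation_def
proof (intro allI impI)
  fix n u
  assume "w n = Some u"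
  then show "u \<subseteq># mset_set {1..k}"
    using assms[of n] by (auto simp: Sc_carrier_def)
qed

definition word_of :: "(nat \<Rightarrow> nat multiset option) \<Rightarrow> nat \<Rightarrow> nat multiset" where
  "word_of w x = (case w x of None \<Rightarrow> {#} | Some u \<Rightarrow> u)"

definition letter_vars :: "(nat \<Rightarrow> nat multiset option) \<Rightarrow> nat \<Rightarrow> nat set" where
  "letter_vars w p = {x. p \<in># word_of w x}"

definition mon_value :: "nat \<Rightarrow> (nat \<Rightarrow> nat multiset option) \<Rightarrow> nat multiset \<Rightarrow> nat multiset option" where
  "mon_value k w m =
     (if (\<forall>x\<in>#m. w x \<noteq> None) \<and> (\<Sum>x\<in>#m. word_of w x) \<subseteq># mset_set {1..k}
      then Some (\<Sum>x\<in>#m. word_of w x) else None)"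

abbreviation Sc_eval :: "nat \<Rightarrow> (nat \<Rightarrow> nat multiset option) \<Rightarrow> trm \<Rightarrow> nat multiset option" where
  "Sc_eval k \<equiv> eval Sc_add (Sc_mul k)"

lemma mon_value_single: "word_valuation k w \<Longrightarrow> mon_value k w {#n#} = w n"
  unfolding mon_value_def word_valuation_def word_of_def by (cases "w n") auto

lemma mon_value_plus: "mon_value k w (p + q) = Sc_mul k (mon_value k w p) (mon_value k w q)"
proof -
  let ?S = "\<lambda>m. \<Sum>x\<in>#m. word_of w x"
  have "?S p \<subseteq># mset_set {1..k} \<and> ?S q \<subseteq># mset_set {1..k}" if "?S p + ?S q \<subseteq># mset_set {1..k}"
    using that by (meson mset_subset_eq_add_left mset_subset_eq_add_right subset_mset.order_trans)
  then show ?thesis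
    unfolding mon_value_def Sc_mul_def by (simp split: option.split) blast
qed

lemma Sc_add_eq_Some_iff: "Sc_add a b = Some c \<longleftrightarrow> a = Some c \<and> b = Some c"
  by (auto simp: Sc_add_def)

lemma Sc_mul_eq_Some_iff:
  "Sc_mul k a b = Some c \<longleftrightarrow> (\<exists>u v. a = Some u \<and> b = Some v \<and> u + v \<subseteq># mset_set {1..k} \<and> c = u + v)"
  by (auto simp: Sc_mul_def split: option.splits)

lemma Sc_mul_all_eq_Some_iff:
  assumes "P \<noteq> {}" "Q \<noteq> {}"
  shows "(\<forall>p\<in>P. \<forall>q\<in>Q. Sc_mul k (f p) (g q) = Some c) \<longleftrightarrow>
    (\<exists>u v. (\<forall>p\<in>P. f p = Some u) \<and> (\<forall>q\<in>Q. g q = Some v) \<and> u + v \<subseteq># mset_set {1..k} \<and> c = u + v)"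
    (is "?all \<longleftrightarrow> ?const")
proof
  assume all: ?all
  obtain p0 q0 where p0: "p0 \<in> P" and q0: "q0 \<in> Q"
    using assms by blast
  then obtain u v where u: "f p0 = Some u" and v: "g q0 = Some v"
    and uv: "u + v \<subseteq># mset_set {1..k}" "c = u + v"
    using all unfolding Sc_mul_eq_Some_iff by blast
  have "f p = Some u" if "p \<in> P" for p
    using all that q0 v uv unfolding Sc_mul_eq_Some_iff by force
  moreover have "g q = Some v" if "q \<in> Q" for q
    using all that p0 u uv unfolding Sc_mul_eq_Some_iff by force
  ultimately show ?const
    using uv by blast
qed (auto simp: Sc_mul_eq_Some_iff)

lemma Sc_eval_eq_Some_iff_monomials:
  assumes "word_valuation k w"
  shows "Sc_eval k w t = Some c \<longleftrightarrow> (\<forall>m\<in>monomials t. mon_value k w m = Some c)"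
proof (induction t arbitrary: c)
  case (Var n)
  show ?case
    using mon_value_single[OF assms] by simp
next
  case (Plus s t)
  then show ?case
    by (auto simp: Sc_add_eq_Some_iff)
next
  case (Times s t)
  have "(\<forall>m\<in>monomials (Times s t). mon_value k w m = Some c) \<longleftrightarrow>
      (\<forall>p\<in>monomials s. \<forall>q\<in>monomials t. mon_value k w (p + q) = Some c)"
    by auto
  also have "\<dots> \<longleftrightarrow>
      (\<forall>p\<in>monomials s. \<forall>q\<in>monomials t. Sc_mul k (mon_value k w p) (mon_value k w q) = Some c)"
    by (simp only: mon_value_plus)
  also have "\<dots> \<longleftrightarrow> (\<exists>u v. (\<forall>p\<in>monomials s. mon_value k w p = Some u) \<and>
      (\<forall>q\<in>monomials t. mon_value k w q = Some v) \<and> u + v \<subseteq># mset_set {1..k} \<and> c = u + v)"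
    by (rule Sc_mul_all_eq_Some_iff[OF monomials_nonempty monomials_nonempty])
  also have "\<dots> \<longleftrightarrow> Sc_eval k w (Times s t) = Some c"
    by (simp add: Times.IH Sc_mul_eq_Some_iff)
  finally show ?case ..
qed

lemma count_le_1_if_subseteq_mset_set: "u \<subseteq># mset_set A \<Longrightarrow> count u p \<le> 1"
  by (metis count_mset_set' dual_order.trans mset_subset_eq_count nat_le_linear not_one_le_zero)

lemma count_eq_if_le_1: "count u p \<le> 1 \<Longrightarrow> count u p = (if p \<in># u then 1 else 0)"
  by (auto simp flip: count_greater_zero_iff)

lemma word_of_subseteq: "word_valuation k w \<Longrightarrow> word_of w x \<subseteq># mset_set {1..k}"
  unfolding word_valuation_def word_of_def by (cases "w x") auto

lemma count_sum_word_of: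
  assumes "word_valuation k w"
  shows "count (\<Sum>x\<in>#m. word_of w x) p = size {#x \<in># m. x \<in> letter_vars w p#}"
proof (induction m)
  case (add x m)
  have "count (word_of w x) p \<le> 1"
    using count_le_1_if_subseteq_mset_set[OF word_of_subseteq[OF assms]] .
  then have "count (word_of w x) p = (if x \<in> letter_vars w p then 1 else 0)"
    unfolding letter_vars_def by (subst count_eq_if_le_1) simp_all
  with add show ?case
    by simp
qed simp

lemma mon_value_eq_Some_iff:
  assumes "word_valuation k w"
  shows "mon_value k w m = Some c \<longleftrightarrow> (\<forall>x\<in>#m. w x \<noteq> None) \<and> c \<subseteq># mset_set {1..k} \<and>
    (\<forall>p. size {#x \<in># m. x \<in> letter_vars w p#} = count c p)"
proof -
  have "mon_value k w m = Some c \<longleftrightarrow>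
      (\<forall>x\<in>#m. w x \<noteq> None) \<and> c \<subseteq># mset_set {1..k} \<and> (\<Sum>x\<in>#m. word_of w x) = c"
    by (auto simp: mon_value_def)
  also have "(\<Sum>x\<in>#m. word_of w x) = c \<longleftrightarrow> (\<forall>p. size {#x \<in># m. x \<in> letter_vars w p#} = count c p)"
    by (simp add: multiset_eq_iff count_sum_word_of[OF assms])
  finally show ?thesis .
qed

theorem Sc_eval_eq_Some_iff:
  assumes "word_valuation k w"
  shows "Sc_eval k w t = Some c \<longleftrightarrow> (\<forall>x\<in>term_vars t. w x \<noteq> None) \<and> c \<subseteq># mset_set {1..k} \<and>
    (\<forall>p. if p \<in># c then transversal t (letter_vars w p) else letter_vars w p \<inter> term_vars t = {})"
proof -
  have letters: "(\<forall>p. \<forall>m\<in>monomials t. size {#x \<in># m. x \<in> letter_vars w p#} = count c p) \<longleftrightarrow>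
      (\<forall>p. if p \<in># c then transversal t (letter_vars w p) else letter_vars w p \<inter> term_vars t = {})"
    if "c \<subseteq># mset_set {1..k}"
  proof -
    have "count c p = (if p \<in># c then 1 else 0)" for p
      using count_le_1_if_subseteq_mset_set[OF that] by (rule count_eq_if_le_1)
    then show ?thesis
      unfolding transversal_def disjoint_term_vars_iff by presburger
  qed
  have "Sc_eval k w t = Some c \<longleftrightarrow> (\<forall>m\<in>monomials t. (\<forall>x\<in>#m. w x \<noteq> None) \<and> c \<subseteq># mset_set {1..k} \<and>
      (\<forall>p. size {#x \<in># m. x \<in> letter_vars w p#} = count c p))"
    unfolding Sc_eval_eq_Some_iff_monomials[OF assms] mon_value_eq_Some_iff[OF assms] ..
  also have "\<dots> \<longleftrightarrow> (\<forall>x\<in>term_vars t. w x \<noteq> None) \<and> c \<subseteq># mset_set {1..k} \<and>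
      (\<forall>p. \<forall>m\<in>monomials t. size {#x \<in># m. x \<in> letter_vars w p#} = count c p)"
    using monomials_nonempty[of t] by (auto simp: term_vars_eq_monomials)
  finally show ?thesis
    using letters by blast
qed

corollary Sc_eval_eq_if_same_transversals:
  assumes "word_valuation k w" "term_vars s = term_vars t" "\<And>X. transversal s X \<longleftrightarrow> transversal t X"
  shows "Sc_eval k w s = Sc_eval k w t"
proof -
  have "Sc_eval k w s = Some c \<longleftrightarrow> Sc_eval k w t = Some c" for c
    by (simp only: Sc_eval_eq_Some_iff[OF assms(1)] assms(2,3))
  then show ?thesis
    by (metis not_None_eq)
qed

(* The isomorphism of S_7 onto S_c(a) with an identity adjoined. *)
fun s7_word :: "s7 \<Rightarrow> nat multiset option" where
  "s7_word Inf7 = None"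
| "s7_word A7 = Some {#1#}"
| "s7_word One7 = Some {#}"

lemma inj_s7_word: "inj s7_word"
proof (rule injI)
  show "s7_word x = s7_word y \<Longrightarrow> x = y" for x y
    by (cases x; cases y) auto
qed

lemma s7_word_eval: "s7_word (eval add7 mul7 v t) = Sc_eval 1 (s7_word \<circ> v) t"
proof -
  have add: "s7_word (add7 x y) = Sc_add (s7_word x) (s7_word y)" for x y
    by (cases x; cases y) (auto simp: add7_def Sc_add_def)
  have "mset_set {1..1::nat} = {#1#}"
    by simp
  then have mul: "s7_word (mul7 x y) = Sc_mul 1 (s7_word x) (s7_word y)" for x y
    by (cases x; cases y) (simp_all add: Sc_mul_def)
  show ?thesis
    by (induction t) (simp_all add: add mul)
qed

lemma word_valuation_1_iff: "word_valuation 1 w \<longleftrightarrow> (\<forall>n. w n \<in> range s7_word)"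
proof -
  have s7_cases: "(\<exists>x. P x) \<longleftrightarrow> P Inf7 \<or> P A7 \<or> P One7" for P
    using s7.exhaust by metis
  have "u \<subseteq># {#1#} \<longleftrightarrow> u = {#} \<or> u = {#1::nat#}" for u
    by (metis empty_le nonempty_subseteq_mset_eq_single subset_mset.order_refl)
  then have "w n \<in> range s7_word \<longleftrightarrow> (\<forall>u. w n = Some u \<longrightarrow> u \<subseteq># mset_set {1..1})" for n
    by (cases "w n") (auto simp: image_iff s7_cases)
  then show ?thesis
    unfolding word_valuation_def by blast
qed

lemma holds_S7_iff_word_valuations:
  "holds UNIV add7 mul7 s t \<longleftrightarrow> (\<forall>w. word_valuation 1 w \<longrightarrow> Sc_eval 1 w s = Sc_eval 1 w t)"
proof
  assume holds: "holds UNIV add7 mul7 s t"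
  show "\<forall>w. word_valuation 1 w \<longrightarrow> Sc_eval 1 w s = Sc_eval 1 w t"
  proof (intro allI impI)
    fix w
    assume "word_valuation 1 w"
    then have w: "w = s7_word \<circ> (inv s7_word \<circ> w)"
      unfolding word_valuation_1_iff by (auto simp: f_inv_into_f)
    have "eval add7 mul7 (inv s7_word \<circ> w) s = eval add7 mul7 (inv s7_word \<circ> w) t"
      using holds unfolding holds_def by blast
    then show "Sc_eval 1 w s = Sc_eval 1 w t"
      by (metis w s7_word_eval)
  qed
next
  assume valuations: "\<forall>w. word_valuation 1 w \<longrightarrow> Sc_eval 1 w s = Sc_eval 1 w t"
  show "holds UNIV add7 mul7 s t"
    unfolding holds_def
  proof (intro allI impI)
    fix v :: "nat \<Rightarrow> s7"
    have "word_valuation 1 (s7_word \<circ> v)"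
      unfolding word_valuation_1_iff by simp
    then have "Sc_eval 1 (s7_word \<circ> v) s = Sc_eval 1 (s7_word \<circ> v) t"
      using valuations by blast
    then show "eval add7 mul7 v s = eval add7 mul7 v t"
      by (metis s7_word_eval inj_s7_word injD)
  qed
qed

lemma Sc_eval_None_iff_var:
  "Sc_eval 1 ((\<lambda>_. Some {#}) (x := None)) u = None \<longleftrightarrow> x \<in> term_vars u"
proof -
  let ?w = "((\<lambda>_. Some {#}) (x := None))"
  have w: "word_valuation 1 ?w"
    by (simp add: word_valuation_def)
  have "letter_vars ?w p = {}" for p
    by (simp add: letter_vars_def word_of_def)
  then have "x \<notin> term_vars u \<Longrightarrow> Sc_eval 1 ?w u = Some {#}"
    unfolding Sc_eval_eq_Some_iff[OF w] by auto
  moreover have "Sc_eval 1 ?w u = Some c \<Longrightarrow> x \<notin> term_vars u" for c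
    unfolding Sc_eval_eq_Some_iff[OF w] by auto
  ultimately show ?thesis
    by (metis not_None_eq option.distinct(1))
qed

lemma Sc_eval_eq_single_iff_transversal:
  "Sc_eval 1 (\<lambda>n. if n \<in> X then Some {#1#} else Some {#}) u = Some {#1#} \<longleftrightarrow> transversal u X"
proof -
  let ?w = "\<lambda>n. if n \<in> X then Some {#1::nat#} else Some {#}"
  have w: "word_valuation 1 ?w"
    by (simp add: word_valuation_def)
  have "letter_vars ?w p = (if p = 1 then X else {})" for p
    by (auto simp: letter_vars_def word_of_def)
  then show ?thesis
    unfolding Sc_eval_eq_Some_iff[OF w] by simp
qed

theorem S7_identity_iff:
  "holds UNIV add7 mul7 s t \<longleftrightarrow> term_vars s = term_vars t \<and> (\<forall>X. transversal s X \<longleftrightarrow> transversal t X)"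
proof
  assume "holds UNIV add7 mul7 s t"
  then have valuations: "word_valuation 1 w \<Longrightarrow> Sc_eval 1 w s = Sc_eval 1 w t" for w
    unfolding holds_S7_iff_word_valuations by blast
  have "x \<in> term_vars s \<longleftrightarrow> x \<in> term_vars t" for x
  proof -
    have "word_valuation 1 ((\<lambda>_. Some {#}) (x := None))"
      by (simp add: word_valuation_def)
    then have "Sc_eval 1 ((\<lambda>_. Some {#}) (x := None)) s = Sc_eval 1 ((\<lambda>_. Some {#}) (x := None)) t"
      by (rule valuations)
    then show ?thesis
      using Sc_eval_None_iff_var[of x s] Sc_eval_None_iff_var[of x t] by simp
  qed
  moreover have "transversal s X \<longleftrightarrow> transversal t X" for X
  proof -
    have "word_valuation 1 (\<lambda>n. if n \<in> X then Some {#1#} else Some {#})"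
      by (simp add: word_valuation_def)
    then have "Sc_eval 1 (\<lambda>n. if n \<in> X then Some {#1#} else Some {#}) s =
        Sc_eval 1 (\<lambda>n. if n \<in> X then Some {#1#} else Some {#}) t"
      by (rule valuations)
    then show ?thesis
      using Sc_eval_eq_single_iff_transversal[of X s] Sc_eval_eq_single_iff_transversal[of X t] by simp
  qed
  ultimately show "term_vars s = term_vars t \<and> (\<forall>X. transversal s X \<longleftrightarrow> transversal t X)"
    by blast
next
  assume same: "term_vars s = term_vars t \<and> (\<forall>X. transversal s X \<longleftrightarrow> transversal t X)"
  show "holds UNIV add7 mul7 s t"
    unfolding holds_S7_iff_word_valuations
  proof (intro allI impI)
    fix w
    assume "word_valuation 1 w"
    then show "Sc_eval 1 w s = Sc_eval 1 w t"
      using same by (intro Sc_eval_eq_if_same_transversals) auto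
  qed
qed

corollary Sc_identity_if_S7_identity:
  assumes "holds UNIV add7 mul7 s t"
  shows "holds (Sc_carrier k) Sc_add (Sc_mul k) s t"
  unfolding holds_def
proof (intro allI impI)
  fix w :: "nat \<Rightarrow> nat multiset option"
  assume "\<forall>n. w n \<in> Sc_carrier k"
  then have "word_valuation k w"
    by (simp add: word_valuation_if_Sc_carrier)
  then show "Sc_eval k w s = Sc_eval k w t"
    using assms unfolding S7_identity_iff by (intro Sc_eval_eq_if_same_transversals) auto
qed

lemma S7_identity_Times_commute: "holds UNIV add7 mul7 (Times s t) (Times t s)"
proof -
  have "monomials (Times s t) = monomials (Times t s)"
    by (auto; metis add.commute)
  then show ?thesis
    unfolding S7_identity_iff transversal_def by auto
qed

definition covered :: "trm \<Rightarrow> bool" where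
  "covered t \<longleftrightarrow> (\<forall>x\<in>term_vars t. \<exists>X. transversal t X \<and> x \<in> X)"

lemma S7_identity_square_if_not_covered:
  assumes "\<not> covered u"
  obtains y where "holds UNIV add7 mul7 u (Times (Times (Var y) (Var y)) u)"
proof -
  obtain y where "y \<in> term_vars u" "\<And>X. transversal u X \<Longrightarrow> y \<notin> X"
    using assms unfolding covered_def by blast
  then have "holds UNIV add7 mul7 u (Times (Times (Var y) (Var y)) u)"
    unfolding S7_identity_iff transversal_square_Times_iff by auto
  then show ?thesis
    by (rule that)
qed

lemma covering_valuation:
  assumes "covered s"
  obtains r w where "r \<ge> 1" "\<And>n. w n \<in> Sc_carrier r" "Sc_eval r w s = Some (mset_set {1..r})"
    "\<And>X. transversal s X \<Longrightarrow> \<exists>p\<in>{1..r}. letter_vars w p = X \<inter> term_vars s"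
proof -
  let ?D = "term_vars s"
  define T where "T = {X. X \<subseteq> ?D \<and> transversal s X}"
  define r where "r = card T"
  have "finite T"
    unfolding T_def using finite_term_vars by simp
  then obtain h where h: "bij_betw h {1..r} T"
    unfolding r_def using ex_bij_betw_nat_finite_1 by blast
  define w where "w x = (if x \<in> ?D then Some (mset_set {p \<in> {1..r}. x \<in> h p}) else None)" for x
  have h_subset: "h p \<subseteq> ?D" "transversal s (h p)" if "p \<in> {1..r}" for p
    using bij_betwE[OF h] that unfolding T_def by auto
  have transversal_is_letter: "\<exists>p\<in>{1..r}. h p = X \<inter> ?D" if "transversal s X" for X
  proof -
    have "X \<inter> ?D \<in> T"
      unfolding T_def using that transversal_Int_term_vars by blast
    then have "X \<inter> ?D \<in> h ` {1..r}"
      unfolding bij_betw_imp_surj_on[OF h] .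
    then obtain p where "X \<inter> ?D = h p" "p \<in> {1..r}"
      by (rule imageE)
    then show ?thesis
      by (intro bexI[of _ p]) simp_all
  qed
  have covers: "\<exists>p\<in>{1..r}. x \<in> h p" if x: "x \<in> ?D" for x
  proof -
    obtain X where "transversal s X" "x \<in> X"
      using assms x unfolding covered_def by blast
    then obtain p where "p \<in> {1..r}" "h p = X \<inter> ?D"
      using transversal_is_letter by blast
    then show ?thesis
      using \<open>x \<in> X\<close> x by blast
  qed
  have letters: "letter_vars w p = (if p \<in> {1..r} then h p else {})" for p
  proof -
    have "p \<in># word_of w x \<longleftrightarrow> x \<in> ?D \<and> p \<in> {1..r} \<and> x \<in> h p" for x
      by (simp add: word_of_def w_def)
    then show ?thesis
      using h_subset(1) unfolding letter_vars_def by auto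
  qed
  have "r \<ge> 1"
  proof -
    obtain x where "x \<in> ?D"
      using term_vars_nonempty by blast
    then obtain p where "p \<in> {1..r}"
      using covers by blast
    then show ?thesis
      by simp
  qed
  moreover have carrier: "w n \<in> Sc_carrier r" for n
  proof (cases "n \<in> ?D")
    case True
    let ?P = "{p \<in> {1..r}. n \<in> h p}"
    have "mset_set ?P \<noteq> {#}"
      using covers[OF True] by (auto simp: mset_set_empty_iff)
    moreover have "mset_set ?P \<subseteq># mset_set {1..r}"
      by (intro subset_imp_msubset_mset_set) auto
    ultimately show ?thesis
      using True by (simp add: w_def Sc_carrier_def)
  qed (simp add: w_def Sc_carrier_def)
  moreover have "Sc_eval r w s = Some (mset_set {1..r})"
  proof -
    have wv: "word_valuation r w"
      using carrier by (rule word_valuation_if_Sc_carrier)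
    have "\<forall>p. if p \<in># mset_set {1..r} then transversal s (letter_vars w p)
        else letter_vars w p \<inter> ?D = {}"
      using h_subset(2) by (simp add: letters)
    then show ?thesis
      unfolding Sc_eval_eq_Some_iff[OF wv] by (simp add: w_def)
  qed
  moreover have "\<exists>p\<in>{1..r}. letter_vars w p = X \<inter> ?D" if "transversal s X" for X
    using transversal_is_letter[OF that] letters by auto
  ultimately show ?thesis
    by (rule that)
qed

lemma term_vars_subset_if_Sc_identity:
  assumes identity: "holds (Sc_carrier r) Sc_add (Sc_mul r) s t"
    and carrier: "\<And>n. w n \<in> Sc_carrier r" and defined: "Sc_eval r w t \<noteq> None"
  shows "term_vars s \<subseteq> term_vars t"
proof
  fix x
  assume x: "x \<in> term_vars s"
  show "x \<in> term_vars t"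
  proof (rule ccontr)
    assume "x \<notin> term_vars t"
    let ?w = "w(x := None)"
    have carrier': "?w n \<in> Sc_carrier r" for n
      using carrier by (simp add: Sc_carrier_def)
    have "Sc_eval r ?w s = Sc_eval r ?w t"
      using identity carrier' unfolding holds_def by blast
    also have "\<dots> = Sc_eval r w t"
      using \<open>x \<notin> term_vars t\<close> by (intro eval_cong_term_vars) auto
    finally obtain c where "Sc_eval r ?w s = Some c"
      using defined by (metis not_None_eq)
    then have "\<forall>y\<in>term_vars s. ?w y \<noteq> None"
      unfolding Sc_eval_eq_Some_iff[OF word_valuation_if_Sc_carrier[OF carrier']] by blast
    then show False
      using x by auto
  qed
qed

lemma holds_sym: "holds S ad mu s t \<Longrightarrow> holds S ad mu t s"
  unfolding holds_def by metis

lemma Sc_identity_transfer_if_covered: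
  assumes identity: "\<forall>k\<ge>1. holds (Sc_carrier k) Sc_add (Sc_mul k) s t" and "covered s"
  shows "term_vars t = term_vars s" "transversal s X \<Longrightarrow> transversal t X"
proof -
  obtain r w where "r \<ge> 1" and carrier: "\<And>n. w n \<in> Sc_carrier r"
    and eval_s: "Sc_eval r w s = Some (mset_set {1..r})"
    and letters: "\<And>X. transversal s X \<Longrightarrow> \<exists>p\<in>{1..r}. letter_vars w p = X \<inter> term_vars s"
    using covering_valuation[OF \<open>covered s\<close>] by blast
  have identity_r: "holds (Sc_carrier r) Sc_add (Sc_mul r) s t"
    using identity \<open>r \<ge> 1\<close> by blast
  then have eval_t: "Sc_eval r w t = Some (mset_set {1..r})"
    using carrier eval_s unfolding holds_def by (metis (no_types))
  show vars: "term_vars t = term_vars s"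
    using term_vars_subset_if_Sc_identity[where w = w, OF identity_r carrier]
      term_vars_subset_if_Sc_identity[where w = w, OF holds_sym[OF identity_r] carrier] eval_s eval_t
    by auto
  assume "transversal s X"
  then obtain p where "p \<in> {1..r}" and p: "letter_vars w p = X \<inter> term_vars s"
    using letters by blast
  have "\<forall>q. if q \<in># mset_set {1..r} then transversal t (letter_vars w q)
      else letter_vars w q \<inter> term_vars t = {}"
    using eval_t unfolding Sc_eval_eq_Some_iff[OF word_valuation_if_Sc_carrier[OF carrier]] by blast
  then have "transversal t (letter_vars w p)"
    using \<open>p \<in> {1..r}\<close> by (simp split: if_splits)
  then show "transversal t X"
    using p vars transversal_Int_term_vars by metis
qed

lemma covered_if_Sc_identity:
  assumes "\<forall>k\<ge>1. holds (Sc_carrier k) Sc_add (Sc_mul k) s t" and "covered s"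
  shows "covered t"
  using Sc_identity_transfer_if_covered[OF assms] assms(2) unfolding covered_def by blast

theorem Sc_identity_cases:
  assumes identity: "\<forall>k\<ge>1. holds (Sc_carrier k) Sc_add (Sc_mul k) s t"
  shows "holds UNIV add7 mul7 s t \<or> \<not> covered s \<and> \<not> covered t"
proof -
  have identity': "\<forall>k\<ge>1. holds (Sc_carrier k) Sc_add (Sc_mul k) t s"
    using identity holds_sym by blast
  have "holds UNIV add7 mul7 s t" if "covered s"
  proof -
    have "covered t"
      using covered_if_Sc_identity[OF identity that] .
    then show ?thesis
      unfolding S7_identity_iff
      using Sc_identity_transfer_if_covered[OF identity that]
        Sc_identity_transfer_if_covered[OF identity' \<open>covered t\<close>] by blast
  qed
  then show ?thesis
    using covered_if_Sc_identity[OF identity'] by blast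
qed

lemma Sc_mul_self_eq_None: "x \<in> Sc_carrier k \<Longrightarrow> Sc_mul k x x = None"
proof (cases x)
  case (Some u)
  assume "x \<in> Sc_carrier k"
  then obtain a where "a \<in># u"
    using Some by (auto simp: Sc_carrier_def)
  then have "count u a \<ge> 1"
    by (metis One_nat_def Suc_leI count_greater_zero_iff)
  then have "\<not> count (u + u) a \<le> 1"
    by (simp only: count_union)
  then have "\<not> u + u \<subseteq># mset_set {1..k}"
    using count_le_1_if_subseteq_mset_set[of "u + u" "{1..k}" a] by blast
  then show ?thesis
    using Some by (simp add: Sc_mul_def)
qed (simp add: Sc_mul_def)

lemma Sc_square_absorbs: "holds (Sc_carrier k) Sc_add (Sc_mul k)
  (Times (Times (Var 0) (Var 0)) (Var 1)) (Times (Var 0) (Var 0))"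
  unfolding holds_def by (simp add: Sc_mul_self_eq_None) (simp add: Sc_mul_def)

lemma in_N_square_absorbs:
  assumes "in_N ad mu"
  shows "mu (mu a a) b = mu a a"
proof -
  have "holds UNIV ad mu (Times (Times (Var 0) (Var 0)) (Var 1)) (Times (Var 0) (Var 0))"
    using assms unfolding in_N_def by blast
  then have "eval ad mu (\<lambda>n. if n = 0 then a else b) (Times (Times (Var 0) (Var 0)) (Var 1)) =
      eval ad mu (\<lambda>n. if n = 0 then a else b) (Times (Var 0) (Var 0))"
    unfolding holds_def by blast
  then show ?thesis
    by simp
qed

lemma in_N_mult_commute:
  assumes "in_N ad mu"
  shows "mu a b = mu b a"
proof -
  have "holds UNIV ad mu (Times (Var 0) (Var 1)) (Times (Var 1) (Var 0))"
    using assms S7_identity_Times_commute unfolding in_N_def by blast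
  then have "eval ad mu (\<lambda>n. if n = 0 then a else b) (Times (Var 0) (Var 1)) =
      eval ad mu (\<lambda>n. if n = 0 then a else b) (Times (Var 1) (Var 0))"
    unfolding holds_def by blast
  then show ?thesis
    by simp
qed

lemma in_N_squares_eq:
  assumes "in_N ad mu"
  shows "mu a a = mu b b"
proof -
  have "mu a a = mu (mu a a) (mu b b)"
    by (simp add: in_N_square_absorbs[OF assms])
  also have "\<dots> = mu (mu b b) (mu a a)"
    by (rule in_N_mult_commute[OF assms])
  also have "\<dots> = mu b b"
    by (simp add: in_N_square_absorbs[OF assms])
  finally show ?thesis .
qed

lemma in_N_eval_not_covered:
  assumes "in_N ad mu" and "\<not> covered u"
  shows "eval ad mu v u = mu a a"
proof -
  obtain y where "holds UNIV add7 mul7 u (Times (Times (Var y) (Var y)) u)"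
    using S7_identity_square_if_not_covered[OF assms(2)] .
  then have "holds UNIV ad mu u (Times (Times (Var y) (Var y)) u)"
    using assms(1) unfolding in_N_def by blast
  then have "eval ad mu v u = mu (mu (v y) (v y)) (eval ad mu v u)"
    unfolding holds_def by simp
  also have "\<dots> = mu (v y) (v y)"
    by (rule in_N_square_absorbs[OF assms(1)])
  also have "\<dots> = mu a a"
    by (rule in_N_squares_eq[OF assms(1)])
  finally show ?thesis .
qed

theorem lemma4p5:
  fixes ad mu :: "'a \<Rightarrow> 'a \<Rightarrow> 'a"
  shows "in_N ad mu \<longleftrightarrow> in_V_Sc ad mu"
proof
  assume N: "in_N ad mu"
  show "in_V_Sc ad mu"
    unfolding in_V_Sc_def
  proof (intro allI impI)
    fix s t
    assume "\<forall>k\<ge>1. holds (Sc_carrier k) Sc_add (Sc_mul k) s t"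
    then consider "holds UNIV add7 mul7 s t" | "\<not> covered s" "\<not> covered t"
      using Sc_identity_cases by blast
    then show "holds UNIV ad mu s t"
    proof cases
      case 1
      then show ?thesis
        using N unfolding in_N_def by blast
    next
      case 2
      then show ?thesis
        unfolding holds_def
        using in_N_eval_not_covered[OF N 2(1)] in_N_eval_not_covered[OF N 2(2)] by metis
    qed
  qed
next
  assume "in_V_Sc ad mu"
  then show "in_N ad mu"
    unfolding in_N_def in_V_Sc_def using Sc_identity_if_S7_identity Sc_square_absorbs by blast
qed

end
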